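(* Let $[\alpha]_{K\times K}\in\mathcal A_{\mathrm{SLS}}$. Then for every subset $S\subseteq[K]$ there exists a p-optimal cyclic partition of $S$, i.e., disjoint cycles $\pi_1,\dots,\pi_n$ with $\bigcup_{l=1}^n\{\pi_l\}=S$ and $\mathcal D_{\Sigma,\mathrm{P\text{-}TIN}}(S)=\Delta_{\pi_1}+\cdots+\Delta_{\pi_n}$.
   Context: $[\alpha]_{K\times K}$ is a matrix of nonnegative reals. SLS regime: $\mathcal A_{\mathrm{SLS}}=\{[\alpha]\in\mathbb R_+^{K\times K}:\ \alpha_{ii}\ge\max(\alpha_{ij},\alpha_{ki},\alpha_{ik}+\alpha_{ji}-\alpha_{jk})\ \forall i,j,k\in[K],\ i\notin\{j,k\}\}$. Cycles: a cycle $\pi=(i_1\to\cdots\to i_M)$, $M\ge1$, is an ordered list of distinct indices of $[K]$, read cyclically ($i_{M+1}=i_1$); $\{\pi\}=\{i_1,\dots,i_M\}$; $\Pi$ is the set of all cycles; cycles are disjoint if their sets are disjoint; a cyclic partition of $S$ is a collection of disjoint cycles whose sets have union $S$. $\delta_{ij}=\alpha_{ii}-\alpha_{ji}$ ($i\neq j$), $\delta_{ii}=0$; $\Delta_\pi=\sum_{m=1}^M\delta_{i_mi_{m+1}}$ if $M>1$, $\Delta_\pi=\alpha_{i_1i_1}$ if $M=1$. For $S\subseteq[K]$, $\mathcal D_{\mathrm{P\text{-}TIN}}(S)=\{(d_k)_{k\in[K]}\in\mathbb R^K: d_k=0\ (k\notin S),\ d_k\ge0\ (k\in S),\ \sum_{k\in\{\pi\}}d_k\le\Delta_\pi\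 \forall \pi\in\Pi \text{ with } \{\pi\}\subseteq S\}$, and $\mathcal D_{\Sigma,\mathrm{P\text{-}TIN}}(S)=\max_{d\in\mathcal D_{\mathrm{P\text{-}TIN}}(S)}\sum_{k\in S}d_k$. *)

theory Defs
  imports "HOL-Analysis.Analysis"
begin

text \<open>Indices [K] are represented as {..<K}; the matrix as alpha :: nat => nat => real.\<close>

definition SLS :: "nat \<Rightarrow> (nat \<Rightarrow> nat \<Rightarrow> real) \<Rightarrow> bool" where
  "SLS K alpha \<longleftrightarrow>
     (\<forall>i<K. \<forall>j<K. alpha i j \<ge> 0) \<and>
     (\<forall>i<K. \<forall>j<K. \<forall>k<K. i \<noteq> j \<and> i \<noteq> k \<longrightarrow>
        alpha i i \<ge> max (alpha i j) (max (alpha k i) (alpha i k + alpha j i - alpha j k)))"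

text \<open>A cycle (i_1 -> ... -> i_M) is a nonempty list of distinct indices, read cyclically.\<close>
definition is_cycle :: "nat \<Rightarrow> nat list \<Rightarrow> bool" where
  "is_cycle K c \<longleftrightarrow> c \<noteq> [] \<and> distinct c \<and> set c \<subseteq> {..<K}"

definition delta :: "(nat \<Rightarrow> nat \<Rightarrow> real) \<Rightarrow> nat \<Rightarrow> nat \<Rightarrow> real" where
  "delta alpha i j = (if i = j then 0 else alpha i i - alpha j i)"

definition Delta :: "(nat \<Rightarrow> nat \<Rightarrow> real) \<Rightarrow> nat list \<Rightarrow> real" where
  "Delta alpha c =
     (if length c = 1 then alpha (c ! 0) (c ! 0)
      else (\<Sum>m<length c. delta alpha (c ! m) (c ! ((m + 1) mod length c))))"

text \<open>The polytope D_{P-TIN}(S); vectors in R^K are functions nat => real that vanish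
  outside S (in particular outside [K]).\<close>
definition D_PTIN :: "nat \<Rightarrow> (nat \<Rightarrow> nat \<Rightarrow> real) \<Rightarrow> nat set \<Rightarrow> (nat \<Rightarrow> real) set" where
  "D_PTIN K alpha S =
     {d. (\<forall>k. k \<notin> S \<longrightarrow> d k = 0) \<and> (\<forall>k\<in>S. d k \<ge> 0) \<and>
         (\<forall>c. is_cycle K c \<and> set c \<subseteq> S \<longrightarrow> (\<Sum>k\<in>set c. d k) \<le> Delta alpha c)}"

definition D_Sigma_PTIN :: "nat \<Rightarrow> (nat \<Rightarrow> nat \<Rightarrow> real) \<Rightarrow> nat set \<Rightarrow> real" where
  "D_Sigma_PTIN K alpha S = (GREATEST v. v \<in> (\<lambda>d. \<Sum>k\<in>S. d k) ` D_PTIN K alpha S)"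

definition cyclic_partition :: "nat \<Rightarrow> nat set \<Rightarrow> nat list list \<Rightarrow> bool" where
  "cyclic_partition K S P \<longleftrightarrow>
     (\<forall>c\<in>set P. is_cycle K c) \<and>
     (\<forall>a<length P. \<forall>b<length P. a \<noteq> b \<longrightarrow> set (P ! a) \<inter> set (P ! b) = {}) \<and>
     (\<Union>c\<in>set P. set c) = S"

end

theory Submission
  imports Defs "HOL-Combinatorics.Cycles"
begin

text \<open>
  Let c = sls_cost \<alpha>, i.e. c i i = \<alpha>_ii and c i j = \<alpha>_ii - \<alpha>_ji for i \<noteq> j, so that \<Delta>_\<pi> is the cost
  \<Sum>_y c y (\<sigma> y) of the cyclic permutation \<sigma> of {\<pi>}. Cyclic partitions of S are the cycle
  decompositions of permutations of S, so summing the cycle constraints over a partition bounds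
  \<Sum> d by the cost of any permutation. Conversely, for a permutation \<sigma> of minimal cost the reduced
  weights c a (\<sigma> b) - c b (\<sigma> b) admit no negative cycle, so shortest-path lengths u together with
  v j = c (\<sigma>\<inverse> j) j - u (\<sigma>\<inverse> j) form a dual solution: u i + v j \<le> c i j with
  \<Sum> (u + v) equal to the cost of \<sigma>. Hence d = u + v satisfies every cycle constraint, and the SLS
  inequalities, which say that c is nonnegative and obeys the triangle inequality, make d
  nonnegative. So D_\<Sigma>(S) is the minimal cost, attained by the cycle decomposition of \<sigma>.
\<close>

fun path_weight :: "('a \<Rightarrow> 'a \<Rightarrow> real) \<Rightarrow> 'a list \<Rightarrow> real" where
  "path_weight w (x # y # r) = w x y + path_weight w (y # r)"
| "path_weight w _ = 0"

definition cyclic_weight :: "('a \<Rightarrow> 'a \<Rightarrow> real) \<Rightarrow> 'a list \<Rightarrow> real" where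
  "cyclic_weight w xs = sum_list (map2 w xs (rotate1 xs))"

lemma path_weight_append_edge:
  "path_weight w (x # xs) + w (last (x # xs)) y = sum_list (map2 w (x # xs) (xs @ [y]))"
  by (induct xs arbitrary: x) auto

lemma path_weight_close:
  "path_weight w (x # xs) + w (last (x # xs)) x = cyclic_weight w (x # xs)"
  using path_weight_append_edge[of w x xs x] by (simp add: cyclic_weight_def)

lemma path_weight_split:
  "path_weight w (xs @ y # ys) = path_weight w (xs @ [y]) + path_weight w (y # ys)"
proof (induct xs)
  case (Cons x xs)
  then show ?case by (cases xs) auto
qed simp

lemma cyclic_weight_eq_sum:
  assumes "distinct xs" and "map f xs = rotate1 xs"
  shows "cyclic_weight w xs = (\<Sum>y\<in>set xs. w y (f y))"
proof -
  have "map2 w xs (map f xs) = map (\<lambda>y. w y (f y)) xs"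
    by (induct xs) auto
  then show ?thesis
    using assms by (simp add: cyclic_weight_def sum_list_distinct_conv_sum_set)
qed

lemma cyclic_weight_separable:
  "cyclic_weight (\<lambda>i j. u i + v j) xs = sum_list (map u xs) + sum_list (map v xs)"
proof -
  have "length xs = length ys \<Longrightarrow>
      sum_list (map2 (\<lambda>i j. u i + v j) xs ys) = sum_list (map u xs) + sum_list (map v ys)" for ys
    by (induct xs ys rule: list_induct2) auto
  moreover have "sum_list (map v (rotate1 xs)) = sum_list (map v xs)"
    by (cases xs) (simp_all add: rotate1_map[symmetric])
  ultimately show ?thesis
    by (simp add: cyclic_weight_def)
qed

lemma cyclic_weight_mono:
  assumes "\<And>x y. x \<in> set xs \<Longrightarrow> y \<in> set xs \<Longrightarrow> w x y \<le> w' x y"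
  shows "cyclic_weight w xs \<le> cyclic_weight w' xs"
  unfolding cyclic_weight_def zip_map_fst_snd
proof (rule sum_list_mono)
  fix q assume "q \<in> set (zip xs (rotate1 xs))"
  then have "fst q \<in> set xs" "snd q \<in> set xs"
    using set_zip_leftD[of "fst q" "snd q"] set_zip_rightD[of "fst q" "snd q"] by fastforce+
  then show "(case q of (x, y) \<Rightarrow> w x y) \<le> (case q of (x, y) \<Rightarrow> w' x y)"
    using assms by (cases q) auto
qed

lemma sum_Union_disjoint_lists:
  assumes "disjoint_family_on (\<lambda>l. set (P ! l)) {..<length P}"
  shows "(\<Sum>y\<in>(\<Union>xs\<in>set P. set xs). f y) = (\<Sum>l<length P. \<Sum>y\<in>set (P ! l). f y)"
proof -
  have "(\<Union>xs\<in>set P. set xs) = (\<Union>l\<in>{..<length P}. set (P ! l))"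
    by (auto simp: set_conv_nth)
  then show ?thesis
    using sum.UNION_disjoint_family[OF _ _ assms] by simp
qed

lemma disjoint_family_on_Cons:
  assumes "disjoint_family_on (\<lambda>l. set (P ! l)) {..<length P}"
    and "set xs \<inter> (\<Union>ys\<in>set P. set ys) = {}"
  shows "disjoint_family_on (\<lambda>l. set ((xs # P) ! l)) {..<length (xs # P)}"
  unfolding disjoint_family_on_def
proof (intro ballI impI)
  fix a b assume ab: "a \<in> {..<length (xs # P)}" "b \<in> {..<length (xs # P)}" "a \<noteq> b"
  have head: "set xs \<inter> set (P ! l) = {}" if "l < length P" for l
    using assms(2) nth_mem[OF that] by blast
  show "set ((xs # P) ! a) \<inter> set ((xs # P) ! b) = {}"
  proof (cases a)
    case 0
    then obtain b' where "b = Suc b'" "b' < length P" using ab by (cases b) auto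
    then show ?thesis using head 0 by simp
  next
    case (Suc a')
    then show ?thesis
      using ab head assms(1) by (cases b) (auto simp: disjoint_family_on_def)
  qed
qed

lemma support_rotates:
  assumes "permutation \<sigma>"
  shows "distinct (support \<sigma> a)" and "map \<sigma> (support \<sigma> a) = rotate1 (support \<sigma> a)"
    and "a \<in> set (support \<sigma> a)"
proof -
  show cs: "distinct (support \<sigma> a)"
    by (rule cycle_of_permutation[OF assms])
  have "map \<sigma> (support \<sigma> a) = map (cycle_of_list (support \<sigma> a)) (support \<sigma> a)"
    using cycle_restrict[OF assms] by auto
  also have "\<dots> = rotate1 (support \<sigma> a)"
    using cyclic_rotation[OF cs, of 1] by simp
  finally show "map \<sigma> (support \<sigma> a) = rotate1 (support \<sigma> a)" .
  show "a \<in> set (support \<sigma> a)"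
    using least_power_of_permutation(2)[OF assms, of a]
    by (auto simp: image_iff intro: bexI[of _ 0])
qed

lemma permutes_cycle_decomposition:
  assumes "finite T" and "\<sigma> permutes T"
  shows "\<exists>P. (\<forall>xs\<in>set P. xs \<noteq> [] \<and> distinct xs \<and> map \<sigma> xs = rotate1 xs) \<and>
    disjoint_family_on (\<lambda>l. set (P ! l)) {..<length P} \<and> (\<Union>xs\<in>set P. set xs) = T"
  using assms
proof (induct "card T" arbitrary: T \<sigma> rule: less_induct)
  case less
  show ?case
  proof (cases "T = {}")
    case True
    then show ?thesis by (intro exI[of _ "[]"]) (auto simp: disjoint_family_on_def)
  next
    case False
    then obtain a where a: "a \<in> T" by blast
    define cs where "cs = support \<sigma> a"
    have cs: "distinct cs" "map \<sigma> cs = rotate1 cs" "a \<in> set cs"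
      using permutation_permutes less.prems unfolding cs_def by (blast intro: support_rotates)+
    have cs_T: "set cs \<subseteq> T"
      using permutes_in_image[OF permutes_funpow[OF less.prems(2)]] a by (auto simp: cs_def)
    then have smaller: "card (T - set cs) < card T"
      using less.prems(1) cs(3) by (intro psubset_card_mono) auto
    define \<tau> where "\<tau> = (\<lambda>y. if y \<in> T - set cs then \<sigma> y else y)"
    have "\<tau> permutes (T - set cs)"
      unfolding \<tau>_def cs_def by (rule semidecomposition[OF less.prems(2,1)])
    then obtain P where P: "\<forall>xs\<in>set P. xs \<noteq> [] \<and> distinct xs \<and> map \<tau> xs = rotate1 xs"
        "disjoint_family_on (\<lambda>l. set (P ! l)) {..<length P}" "(\<Union>xs\<in>set P. set xs) = T - set cs"
      using less.hyps[OF smaller] less.prems(1) by blast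
    have "map \<sigma> xs = rotate1 xs" if xs: "xs \<in> set P" for xs
    proof -
      have "map \<sigma> xs = map \<tau> xs"
        using P(3) xs by (intro map_cong) (auto simp: \<tau>_def)
      then show ?thesis using P(1) xs by simp
    qed
    moreover have "disjoint_family_on (\<lambda>l. set ((cs # P) ! l)) {..<length (cs # P)}"
      using P(2,3) by (intro disjoint_family_on_Cons) auto
    ultimately show ?thesis
      using P cs cs_T by (intro exI[of _ "cs # P"]) auto
  qed
qed

definition assignment_cost :: "'a set \<Rightarrow> ('a \<Rightarrow> 'a \<Rightarrow> real) \<Rightarrow> ('a \<Rightarrow> 'a) \<Rightarrow> real" where
  "assignment_cost S c \<sigma> = (\<Sum>y\<in>S. c y (\<sigma> y))"

lemma exists_min_cost_permutation:
  assumes "finite S"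
  obtains \<sigma> where "\<sigma> permutes S" and "\<And>\<tau>. \<tau> permutes S \<Longrightarrow> assignment_cost S c \<sigma> \<le> assignment_cost S c \<tau>"
proof -
  let ?costs = "assignment_cost S c ` {\<tau>. \<tau> permutes S}"
  have fin: "finite ?costs"
    using finite_permutations[OF assms] by simp
  have "?costs \<noteq> {}"
    using permutes_id by blast
  then obtain \<sigma> where "\<sigma> permutes S" "assignment_cost S c \<sigma> = Min ?costs"
    using Min_in[OF fin] by auto
  then show thesis
    using that Min_le[OF fin] by simp
qed

locale min_cost_assignment =
  fixes S :: "'a set" and c :: "'a \<Rightarrow> 'a \<Rightarrow> real" and \<sigma> :: "'a \<Rightarrow> 'a"
  assumes finite_S: "finite S"
    and permutes_S: "\<sigma> permutes S"
    and minimal: "\<And>\<tau>. \<tau> permutes S \<Longrightarrow> assignment_cost S c \<sigma> \<le> assignment_cost S c \<tau>"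
begin

definition reduced_weight :: "'a \<Rightarrow> 'a \<Rightarrow> real" where
  "reduced_weight a b = c a (\<sigma> b) - c b (\<sigma> b)"

lemma reduced_weight_self [simp]: "reduced_weight a a = 0"
  by (simp add: reduced_weight_def)

lemma cyclic_reduced_weight_nonneg:
  assumes "distinct zs" and "set zs \<subseteq> S"
  shows "0 \<le> cyclic_weight reduced_weight zs"
proof -
  define \<rho> where "\<rho> = cycle_of_list zs"
  have \<rho>: "\<rho> permutes set zs"
    unfolding \<rho>_def by (rule cycle_permutes)
  have "cyclic_weight reduced_weight zs = (\<Sum>y\<in>set zs. reduced_weight y (\<rho> y))"
    using cyclic_rotation[OF assms(1), of 1] by (intro cyclic_weight_eq_sum[OF assms(1)]) (simp add: \<rho>_def)
  also have "\<dots> = (\<Sum>y\<in>set zs. c y (\<sigma> (\<rho> y))) - (\<Sum>y\<in>set zs. c (\<rho> y) (\<sigma> (\<rho> y)))"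
    by (simp add: reduced_weight_def sum_subtractf)
  also have "(\<Sum>y\<in>set zs. c (\<rho> y) (\<sigma> (\<rho> y))) = (\<Sum>y\<in>set zs. c y (\<sigma> y))"
    using sum.reindex_bij_betw[OF permutes_imp_bij[OF \<rho>]] .
  also have "(\<Sum>y\<in>set zs. c y (\<sigma> (\<rho> y))) - (\<Sum>y\<in>set zs. c y (\<sigma> y))
      = assignment_cost S c (\<sigma> \<circ> \<rho>) - assignment_cost S c \<sigma>"
    unfolding assignment_cost_def sum_subtractf[symmetric] comp_def
    by (rule sum.mono_neutral_left[OF finite_S assms(2)]) (auto simp: permutes_not_in[OF \<rho>])
  also have "\<dots> \<ge> 0"
    using minimal[OF permutes_compose[OF permutes_subset[OF \<rho> assms(2)] permutes_S]] by simp
  finally show ?thesis .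
qed

definition paths_from :: "'a \<Rightarrow> 'a list set" where
  "paths_from i = {l. distinct l \<and> set l \<subseteq> S \<and> l \<noteq> [] \<and> hd l = i}"

lemma finite_paths_from: "finite (paths_from i)"
proof (rule finite_subset[OF _ finite_lists_length_le[OF finite_S, of "card S"]])
  show "paths_from i \<subseteq> {xs. set xs \<subseteq> S \<and> length xs \<le> card S}"
    using finite_S by (auto simp: paths_from_def distinct_card[symmetric] intro: card_mono)
qed

lemma singleton_in_paths_from: "i \<in> S \<Longrightarrow> [i] \<in> paths_from i"
  by (simp add: paths_from_def)

definition row_potential :: "'a \<Rightarrow> real" where
  "row_potential i = Min (path_weight reduced_weight ` paths_from i)"

definition column_potential :: "'a \<Rightarrow> real" where
  "column_potential j = c (inv \<sigma> j) j - row_potential (inv \<sigma> j)"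

lemma row_potential_le: "l \<in> paths_from i \<Longrightarrow> row_potential i \<le> path_weight reduced_weight l"
  unfolding row_potential_def by (rule Min_le) (auto simp: finite_paths_from)

lemma row_potential_attained:
  assumes "i \<in> S"
  obtains l where "l \<in> paths_from i" and "row_potential i = path_weight reduced_weight l"
proof -
  have "row_potential i \<in> path_weight reduced_weight ` paths_from i"
    unfolding row_potential_def using singleton_in_paths_from[OF assms]
    by (intro Min_in) (auto simp: finite_paths_from)
  then show thesis using that by blast
qed

lemma row_potential_nonpos: "i \<in> S \<Longrightarrow> row_potential i \<le> 0"
  using row_potential_le[OF singleton_in_paths_from] by simp

text \<open>Prepending i to a path from y either gives a path from i, or closes a cycle through i,
  whose reduced weight is nonnegative.\<close>
lemma row_potential_le_prepend:
  assumes l: "l \<in> paths_from y" and "i \<in> S"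
  shows "row_potential i \<le> reduced_weight i y + path_weight reduced_weight l"
proof (cases "i \<in> set l")
  case False
  obtain r where "l = y # r" using l by (cases l) (auto simp: paths_from_def)
  moreover have "i # l \<in> paths_from i"
    using assms False by (auto simp: paths_from_def)
  ultimately show ?thesis using row_potential_le[of "i # l" i] by simp
next
  case True
  then obtain A B where AB: "l = A @ i # B" by (meson split_list)
  show ?thesis
  proof (cases A)
    case Nil
    then show ?thesis using row_potential_le[OF l] l AB by (simp add: paths_from_def)
  next
    case (Cons a A')
    have "a = y" "distinct (A @ [i])" "set (A @ [i]) \<subseteq> S" "i # B \<in> paths_from i"
      using l AB Cons by (auto simp: paths_from_def)
    then have "0 \<le> path_weight reduced_weight (y # A' @ [i]) + reduced_weight i y"
      using cyclic_reduced_weight_nonneg[of "y # A' @ [i]"] path_weight_close[of _ y "A' @ [i]"]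
        Cons by simp
    then show ?thesis
      using row_potential_le[OF \<open>i # B \<in> paths_from i\<close>] path_weight_split[of _ A i B]
        AB Cons \<open>a = y\<close> by simp
  qed
qed

lemma row_potential_le_reassign:
  assumes "i \<in> S" and "y \<in> S"
  shows "row_potential i \<le> row_potential y + c i (\<sigma> y) - c y (\<sigma> y)"
proof -
  obtain l where "l \<in> paths_from y" "row_potential y = path_weight reduced_weight l"
    using row_potential_attained[OF assms(2)] .
  then show ?thesis
    using row_potential_le_prepend[OF _ assms(1)] by (fastforce simp: reduced_weight_def)
qed

lemma dual_feasible:
  assumes "i \<in> S" and "j \<in> S"
  shows "row_potential i + column_potential j \<le> c i j"
proof -
  define y where "y = inv \<sigma> j"
  have y: "y \<in> S" "\<sigma> y = j"
    using permutes_in_image[OF permutes_inv[OF permutes_S]] permutes_inverses(1)[OF permutes_S] assms(2)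
    by (auto simp: y_def)
  then show ?thesis
    using row_potential_le_reassign[OF assms(1) y(1)] by (simp add: column_potential_def y_def[symmetric])
qed

lemma dual_objective:
  "(\<Sum>k\<in>S. row_potential k + column_potential k) = assignment_cost S c \<sigma>"
proof -
  have inv_bij: "bij_betw (inv \<sigma>) S S"
    by (rule permutes_imp_bij[OF permutes_inv[OF permutes_S]])
  have "(\<Sum>k\<in>S. c (inv \<sigma> k) k) = (\<Sum>y\<in>S. c (inv \<sigma> (\<sigma> y)) (\<sigma> y))"
    by (rule sum.reindex_bij_betw[OF permutes_imp_bij[OF permutes_S], symmetric])
  then have "(\<Sum>k\<in>S. c (inv \<sigma> k) k) = assignment_cost S c \<sigma>"
    by (simp add: assignment_cost_def permutes_inverses(2)[OF permutes_S])
  moreover have "(\<Sum>k\<in>S. row_potential (inv \<sigma> k)) = (\<Sum>k\<in>S. row_potential k)"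
    by (rule sum.reindex_bij_betw[OF inv_bij])
  ultimately show ?thesis
    by (simp add: column_potential_def sum.distrib sum_subtractf)
qed

text \<open>Here x is the second vertex of a shortest path from i.\<close>
lemma row_potential_first_edge:
  assumes "i \<in> S"
  shows "row_potential i = 0 \<or>
    (\<exists>x\<in>S. x \<noteq> i \<and> (\<forall>j\<in>S. row_potential j \<le> row_potential i + c j (\<sigma> x) - c i (\<sigma> x)))"
proof -
  obtain l where l: "l \<in> paths_from i" "row_potential i = path_weight reduced_weight l"
    using row_potential_attained[OF assms] .
  then obtain r where "l = i # r" by (cases l) (auto simp: paths_from_def)
  show ?thesis
  proof (cases r)
    case Nil
    then show ?thesis using l \<open>l = i # r\<close> by simp
  next
    case (Cons x r')
    have x: "x \<in> S" "x \<noteq> i" "x # r' \<in> paths_from x"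
      using l(1) \<open>l = i # r\<close> Cons by (auto simp: paths_from_def)
    have u_i: "row_potential i = reduced_weight i x + path_weight reduced_weight (x # r')"
      using l(2) \<open>l = i # r\<close> Cons by simp
    have "row_potential j \<le> row_potential i + c j (\<sigma> x) - c i (\<sigma> x)" if "j \<in> S" for j
      using row_potential_le_prepend[OF x(3) that] u_i by (simp add: reduced_weight_def)
    then show ?thesis using x by blast
  qed
qed

text \<open>With p = \<sigma>\<inverse> k the claim is u p \<le> u k + c p k. Bound u p through some y with
  \<sigma> y \<noteq> p, namely y = k or, if \<sigma> k = p, the second vertex of a shortest path from k;
  then apply the triangle inequality to p, k, \<sigma> y.\<close>
lemma dual_nonneg:
  assumes nonneg: "\<And>i j. i \<in> S \<Longrightarrow> j \<in> S \<Longrightarrow> 0 \<le> c i j"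
    and triangle: "\<And>x n z. x \<in> S \<Longrightarrow> n \<in> S \<Longrightarrow> z \<in> S \<Longrightarrow> x \<noteq> n \<Longrightarrow> n \<noteq> z \<Longrightarrow> x \<noteq> z \<Longrightarrow>
        c x z \<le> c x n + c n z"
    and k: "k \<in> S"
  shows "0 \<le> row_potential k + column_potential k"
proof -
  define p where "p = inv \<sigma> k"
  have p: "p \<in> S" "\<sigma> p = k"
    using permutes_in_image[OF permutes_inv[OF permutes_S]] permutes_inverses(1)[OF permutes_S] k
    by (auto simp: p_def)
  have sum_eq: "row_potential k + column_potential k = row_potential k + c p k - row_potential p"
    by (simp add: column_potential_def p_def)
  have "row_potential p \<le> row_potential k + c p k" if "p \<noteq> k"
  proof -
    have "row_potential k = 0 \<or> (\<exists>y\<in>S. \<sigma> y \<noteq> p \<and>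
        row_potential p \<le> row_potential k + c p (\<sigma> y) - c k (\<sigma> y))"
    proof (cases "\<sigma> k = p")
      case True
      have "\<sigma> x \<noteq> p" if "x \<noteq> k" for x
        using that True permutes_inj[OF permutes_S] by (auto dest: injD)
      then show ?thesis
        using row_potential_first_edge[OF k] p(1) by blast
    next
      case False
      then show ?thesis
        using row_potential_le_reassign[OF p(1) k] k by blast
    qed
    moreover have "c p (\<sigma> y) \<le> c p k + c k (\<sigma> y)" if "y \<in> S" "\<sigma> y \<noteq> p" for y
    proof (cases "k = \<sigma> y")
      case True
      then show ?thesis using nonneg[OF k k] by simp
    next
      case False
      then show ?thesis
        using triangle[OF p(1) k _ \<open>p \<noteq> k\<close> False] permutes_in_image[OF permutes_S] that by auto
    qed
    ultimately show ?thesis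
      using row_potential_nonpos[OF p(1)] nonneg[OF p(1) k] by fastforce
  qed
  then show ?thesis
    using sum_eq nonneg[OF k k] by (cases "p = k") auto
qed

end

definition sls_cost :: "(nat \<Rightarrow> nat \<Rightarrow> real) \<Rightarrow> nat \<Rightarrow> nat \<Rightarrow> real" where
  "sls_cost alpha i j = (if i = j then alpha i i else alpha i i - alpha j i)"

lemma Delta_eq_cyclic_weight:
  assumes "distinct cs" and "cs \<noteq> []"
  shows "Delta alpha cs = cyclic_weight (sls_cost alpha) cs"
proof (cases "length cs = 1")
  case True
  then obtain a where "cs = [a]" by (auto simp: length_Suc_conv)
  then show ?thesis by (simp add: Delta_def cyclic_weight_def sls_cost_def)
next
  case False
  let ?n = "length cs"
  have "?n \<noteq> 0" using assms(2) by simp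
  then have n: "2 \<le> ?n" using False by linarith
  have "cs ! m \<noteq> cs ! ((m + 1) mod ?n)" if "m < ?n" for m
  proof -
    have "m \<noteq> (m + 1) mod ?n"
    proof (cases "m + 1 < ?n")
      case False
      then have "m + 1 = ?n" using that by simp
      then show ?thesis using n by simp
    qed simp
    moreover have "(m + 1) mod ?n < ?n" using n by (intro mod_less_divisor) linarith
    ultimately show ?thesis
      using that nth_eq_iff_index_eq[OF assms(1)] by simp
  qed
  then have "(\<Sum>m<?n. delta alpha (cs ! m) (cs ! ((m + 1) mod ?n)))
      = (\<Sum>m<?n. sls_cost alpha (cs ! m) (rotate1 cs ! m))"
    by (intro sum.cong) (simp_all add: nth_rotate1 delta_def sls_cost_def)
  then show ?thesis
    using False by (simp add: Delta_def cyclic_weight_def sum_list_sum_nth atLeast0LessThan)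
qed

context
  fixes K :: nat and alpha :: "nat \<Rightarrow> nat \<Rightarrow> real"
  assumes sls: "SLS K alpha"
begin

lemma sls_cost_nonneg:
  assumes "i < K" and "j < K"
  shows "0 \<le> sls_cost alpha i j"
proof (cases "i = j")
  case False
  then have "max (alpha i j) (max (alpha j i) (alpha i j + alpha j i - alpha j j)) \<le> alpha i i"
    using sls assms unfolding SLS_def by blast
  then show ?thesis using False by (simp add: sls_cost_def)
next
  case True
  then show ?thesis
    using sls assms unfolding SLS_def sls_cost_def by simp
qed

text \<open>The SLS inequality \<alpha>_nn \<ge> \<alpha>_nx + \<alpha>_zn - \<alpha>_zx is exactly this triangle inequality.\<close>
lemma sls_cost_triangle:
  assumes "x < K" "n < K" "z < K" and "x \<noteq> n" "n \<noteq> z" "x \<noteq> z"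
  shows "sls_cost alpha x z \<le> sls_cost alpha x n + sls_cost alpha n z"
proof -
  have "max (alpha n z) (max (alpha x n) (alpha n x + alpha z n - alpha z x)) \<le> alpha n n"
    using sls assms unfolding SLS_def by blast
  then show ?thesis using assms(4-6) by (simp add: sls_cost_def)
qed

end

lemma sum_le_Delta_cyclic_partition:
  assumes "cyclic_partition K S P" and "d \<in> D_PTIN K alpha S"
  shows "(\<Sum>k\<in>S. d k) \<le> (\<Sum>l<length P. Delta alpha (P ! l))"
proof -
  have P: "\<forall>cs\<in>set P. is_cycle K cs" "disjoint_family_on (\<lambda>l. set (P ! l)) {..<length P}"
      "(\<Union>cs\<in>set P. set cs) = S"
    using assms(1) by (auto simp: cyclic_partition_def disjoint_family_on_def)
  have "(\<Sum>k\<in>S. d k) = (\<Sum>l<length P. \<Sum>k\<in>set (P ! l). d k)"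
    using sum_Union_disjoint_lists[OF P(2)] P(3) by simp
  also have "\<dots> \<le> (\<Sum>l<length P. Delta alpha (P ! l))"
  proof (rule sum_mono)
    fix l assume "l \<in> {..<length P}"
    then have "is_cycle K (P ! l)" "set (P ! l) \<subseteq> S"
      using P(1,3) by auto
    then show "(\<Sum>k\<in>set (P ! l). d k) \<le> Delta alpha (P ! l)"
      using assms(2) by (auto simp: D_PTIN_def)
  qed
  finally show ?thesis .
qed

lemma cyclic_partition_of_permutation:
  assumes "\<sigma> permutes S" and "S \<subseteq> {..<K}"
  obtains P where "cyclic_partition K S P"
    and "(\<Sum>l<length P. Delta alpha (P ! l)) = assignment_cost S (sls_cost alpha) \<sigma>"
proof -
  have "finite S" using assms(2) finite_subset by blast
  then obtain P where P: "\<forall>cs\<in>set P. cs \<noteq> [] \<and> distinct cs \<and> map \<sigma> cs = rotate1 cs"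
      "disjoint_family_on (\<lambda>l. set (P ! l)) {..<length P}" "(\<Union>cs\<in>set P. set cs) = S"
    using permutes_cycle_decomposition[OF _ assms(1)] by blast
  have "cyclic_partition K S P"
    using P assms(2) by (auto simp: cyclic_partition_def is_cycle_def disjoint_family_on_def)
  moreover have "(\<Sum>l<length P. Delta alpha (P ! l)) = assignment_cost S (sls_cost alpha) \<sigma>"
  proof -
    have "(\<Sum>l<length P. Delta alpha (P ! l))
        = (\<Sum>l<length P. \<Sum>y\<in>set (P ! l). sls_cost alpha y (\<sigma> y))"
      using P(1) by (intro sum.cong) (simp_all add: Delta_eq_cyclic_weight cyclic_weight_eq_sum)
    then show ?thesis
      using sum_Union_disjoint_lists[OF P(2), of "\<lambda>y. sls_cost alpha y (\<sigma> y)"] P(3)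
      by (simp add: assignment_cost_def)
  qed
  ultimately show thesis using that by blast
qed

lemma dual_solution_in_D_PTIN:
  assumes feasible: "\<And>i j. i \<in> S \<Longrightarrow> j \<in> S \<Longrightarrow> u i + v j \<le> sls_cost alpha i j"
    and nonneg: "\<And>k. k \<in> S \<Longrightarrow> 0 \<le> u k + v k"
  shows "(\<lambda>k. if k \<in> S then u k + v k else 0) \<in> D_PTIN K alpha S"
proof -
  have "(\<Sum>k\<in>set cs. if k \<in> S then u k + v k else 0) \<le> Delta alpha cs"
    if "is_cycle K cs" and cs_S: "set cs \<subseteq> S" for cs
  proof -
    have cs: "distinct cs" "cs \<noteq> []" using that(1) by (auto simp: is_cycle_def)
    have "(\<Sum>k\<in>set cs. if k \<in> S then u k + v k else 0) = (\<Sum>k\<in>set cs. u k + v k)"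
      using cs_S by (intro sum.cong) auto
    also have "\<dots> = cyclic_weight (\<lambda>i j. u i + v j) cs"
      by (simp add: cyclic_weight_separable sum.distrib sum_list_distinct_conv_sum_set[OF cs(1)])
    also have "\<dots> \<le> cyclic_weight (sls_cost alpha) cs"
      using cs_S by (intro cyclic_weight_mono feasible) auto
    also have "\<dots> = Delta alpha cs"
      by (rule Delta_eq_cyclic_weight[OF cs, symmetric])
    finally show ?thesis .
  qed
  then show ?thesis
    using nonneg by (auto simp: D_PTIN_def)
qed

lemma D_Sigma_PTIN_eq_min_assignment_cost:
  assumes "SLS K alpha" and S: "S \<subseteq> {..<K}"
    and "min_cost_assignment S (sls_cost alpha) \<sigma>"
  shows "D_Sigma_PTIN K alpha S = assignment_cost S (sls_cost alpha) \<sigma>"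
proof -
  interpret min_cost_assignment S "sls_cost alpha" \<sigma> by fact
  let ?d = "\<lambda>k. if k \<in> S then row_potential k + column_potential k else 0"
  have "0 \<le> row_potential k + column_potential k" if "k \<in> S" for k
  proof (rule dual_nonneg[OF _ _ that])
    show "0 \<le> sls_cost alpha i j" if "i \<in> S" "j \<in> S" for i j
      using sls_cost_nonneg[OF assms(1)] that S by blast
    show "sls_cost alpha x z \<le> sls_cost alpha x n + sls_cost alpha n z"
      if "x \<in> S" "n \<in> S" "z \<in> S" "x \<noteq> n" "n \<noteq> z" "x \<noteq> z" for x n z
      using sls_cost_triangle[OF assms(1)] that S by blast
  qed
  then have "?d \<in> D_PTIN K alpha S"
    using dual_feasible by (rule dual_solution_in_D_PTIN[rotated])
  moreover have "(\<Sum>k\<in>S. ?d k) = assignment_cost S (sls_cost alpha) \<sigma>"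
    using dual_objective by simp
  moreover obtain P where "cyclic_partition K S P"
      "(\<Sum>l<length P. Delta alpha (P ! l)) = assignment_cost S (sls_cost alpha) \<sigma>"
    using cyclic_partition_of_permutation[OF permutes_S S] .
  ultimately show ?thesis
    unfolding D_Sigma_PTIN_def using sum_le_Delta_cyclic_partition
    by (intro Greatest_equality) (metis (no_types, lifting) image_eqI, fastforce)
qed

theorem theorem5:
  fixes K :: nat and alpha :: "nat \<Rightarrow> nat \<Rightarrow> real" and S :: "nat set"
  assumes "SLS K alpha"
    and "S \<subseteq> {..<K}"
  shows "\<exists>P. cyclic_partition K S P \<and>
             D_Sigma_PTIN K alpha S = (\<Sum>l<length P. Delta alpha (P ! l))"
proof -
  have "finite S" using assms(2) finite_subset by blast
  then obtain \<sigma> where \<sigma>: "\<sigma> permutes S"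
    and "\<And>\<tau>. \<tau> permutes S \<Longrightarrow> assignment_cost S (sls_cost alpha) \<sigma> \<le> assignment_cost S (sls_cost alpha) \<tau>"
    using exists_min_cost_permutation[of S "sls_cost alpha"] by blast
  then have "min_cost_assignment S (sls_cost alpha) \<sigma>"
    using \<open>finite S\<close> by unfold_locales
  then have "D_Sigma_PTIN K alpha S = assignment_cost S (sls_cost alpha) \<sigma>"
    using D_Sigma_PTIN_eq_min_assignment_cost assms by blast
  moreover obtain P where "cyclic_partition K S P"
      "(\<Sum>l<length P. Delta alpha (P ! l)) = assignment_cost S (sls_cost alpha) \<sigma>"
    using cyclic_partition_of_permutation[OF \<sigma> assms(2)] .
  ultimately show ?thesis by auto
qed

end
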